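(* For each semiquasitriangular Hopf algebra $(H,R)$ with Drinfeld element $u=S(R^{(2)})R^{(1)}$, one has $S^2(u)=u$, $S^2(u^{-1})=u^{-1}$ and $uS(u)=S(u)u$.
   Context: All vector spaces are over a field $k$, $\otimes=\otimes_k$. For a Hopf algebra $H$ with comultiplication $\Delta$, counit $\epsilon$, antipode $S$, we use Sweedler notation $\Delta(h)=h_1\otimes h_2$, etc. $\operatorname{Z}(H)$ is the centre of $H$. For $R\in H\otimes H$ we write $R=R^{(1)}\otimes R^{(2)}$ (summation understood); $R'^{(1)}\otimes R'^{(2)}$ denotes another copy of $R$. Definition (semiquasitriangular Hopf algebra): a pair $(H,R)$ with $H$ a Hopf algebra with bijective antipode and $R\in H\otimes H$ invertible such that (1) $R^{(1)}_1\otimes R^{(1)}_2\otimes R^{(2)} = R^{(1)}\otimes R'^{(1)}\otimes R^{(2)}R'^{(2)}$; (2) $R^{(1)}\otimes R^{(2)}_1\otimes R^{(2)}_2 = R^{(1)}R'^{(1)}\otimes R'^{(2)}\otimes R^{(2)}$; (3) $R^{(1)}\otimes R^{(2)}_2R'^{(1)}\otimes R^{(2)}_1R'^{(2)} = R^{(1)}\otimes R'^{(1)}R^{(2)}_1\otimes R'^{(2)}R^{(2)}_2$; (4) $R^{(1)}_2R'^{(1)}\otimes R^{(1)}_1R'^{(2)}\otimes R^{(2)} = R'^{(1)}R^{(1)}_1\otimes R'^{(2)}R^{(1)}_2\otimes R^{(2)}$; (5) $\nu(h):=R^{(2)}h_2R'^{(2)}\otimes S(h_1)S(R^{(1)})h_3R'^{(1)}\in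 H\otimes\operatorname{Z}(H)$ for all $h\in H$; (6) $\nu(h)=R^{(1)}h_2R'^{(1)}\otimes S(R'^{(2)})S(h_1)R^{(2)}h_3$ for all $h\in H$. The Drinfeld element $u$ is invertible (with $u^{-1}=R^{(2)}S^2(R^{(1)})$). *)

theory Defs
  imports "HOL-Library.Poly_Mapping"
begin

text \<open>
  Vector spaces over a field 'k are modelled by a chosen basis: a vector of a
  space with basis indexed by type 'a is a finitely supported function
  'a =>0 'k.  The tensor product of spaces with bases 'a and 'c is the space with
  basis 'a * 'c; the triple tensor product uses the basis 'a * 'c * 'd.
  Linear maps are given by their values on basis vectors and extended linearly
  by hv_lin.  A Hopf algebra H is given by structure constants on a basis 'b:
  multiplication mu, unit eta, comultiplication delta, counit eps, antipode S.
\<close>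

definition hv_smul :: "'k::field \<Rightarrow> ('a \<Rightarrow>\<^sub>0 'k) \<Rightarrow> ('a \<Rightarrow>\<^sub>0 'k)" where
  "hv_smul c x = Poly_Mapping.map (\<lambda>v. c * v) x"

definition hv_lin :: "('a \<Rightarrow> ('c \<Rightarrow>\<^sub>0 'k::field)) \<Rightarrow> ('a \<Rightarrow>\<^sub>0 'k) \<Rightarrow> ('c \<Rightarrow>\<^sub>0 'k)" where
  "hv_lin f x = (\<Sum>a\<in>Poly_Mapping.keys x. hv_smul (Poly_Mapping.lookup x a) (f a))"

definition hv_fun :: "('a \<Rightarrow> 'k::field) \<Rightarrow> ('a \<Rightarrow>\<^sub>0 'k) \<Rightarrow> 'k" where
  "hv_fun f x = (\<Sum>a\<in>Poly_Mapping.keys x. Poly_Mapping.lookup x a * f a)"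

definition hv_basis :: "'a \<Rightarrow> ('a \<Rightarrow>\<^sub>0 'k::field)" where
  "hv_basis a = Poly_Mapping.single a 1"

definition hv_tens :: "('a \<Rightarrow>\<^sub>0 'k::field) \<Rightarrow> ('c \<Rightarrow>\<^sub>0 'k) \<Rightarrow> ('a \<times> 'c \<Rightarrow>\<^sub>0 'k)" where
  "hv_tens x y = hv_lin (\<lambda>a. hv_lin (\<lambda>c. hv_basis (a, c)) y) x"

definition hmul :: "('b \<Rightarrow> 'b \<Rightarrow> ('b \<Rightarrow>\<^sub>0 'k::field)) \<Rightarrow> ('b \<Rightarrow>\<^sub>0 'k) \<Rightarrow> ('b \<Rightarrow>\<^sub>0 'k) \<Rightarrow> ('b \<Rightarrow>\<^sub>0 'k)" where
  "hmul mu x y = hv_lin (\<lambda>a. hv_lin (\<lambda>b. mu a b) y) x"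

definition hmul2 :: "('b \<Rightarrow> 'b \<Rightarrow> ('b \<Rightarrow>\<^sub>0 'k::field)) \<Rightarrow> ('b \<times> 'b \<Rightarrow>\<^sub>0 'k) \<Rightarrow> ('b \<times> 'b \<Rightarrow>\<^sub>0 'k) \<Rightarrow> ('b \<times> 'b \<Rightarrow>\<^sub>0 'k)" where
  "hmul2 mu t s = hv_lin (\<lambda>(a, b). hv_lin (\<lambda>(c, d). hv_tens (mu a c) (mu b d)) s) t"

definition hDelta :: "('b \<Rightarrow> ('b \<times> 'b \<Rightarrow>\<^sub>0 'k::field)) \<Rightarrow> ('b \<Rightarrow>\<^sub>0 'k) \<Rightarrow> ('b \<times> 'b \<Rightarrow>\<^sub>0 'k)" where
  "hDelta delta x = hv_lin delta x"

definition hS :: "('b \<Rightarrow> ('b \<Rightarrow>\<^sub>0 'k::field)) \<Rightarrow> ('b \<Rightarrow>\<^sub>0 'k) \<Rightarrow> ('b \<Rightarrow>\<^sub>0 'k)" where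
  "hS S x = hv_lin S x"

definition hopf_algebra ::
  "('b \<Rightarrow> 'b \<Rightarrow> ('b \<Rightarrow>\<^sub>0 'k::field)) \<Rightarrow> ('b \<Rightarrow>\<^sub>0 'k) \<Rightarrow> ('b \<Rightarrow> ('b \<times> 'b \<Rightarrow>\<^sub>0 'k))
    \<Rightarrow> ('b \<Rightarrow> 'k) \<Rightarrow> ('b \<Rightarrow> ('b \<Rightarrow>\<^sub>0 'k)) \<Rightarrow> bool" where
  "hopf_algebra mu eta delta eps S \<longleftrightarrow>
     \<comment> \<open>associative unital algebra\<close>
     (\<forall>x y z. hmul mu (hmul mu x y) z = hmul mu x (hmul mu y z)) \<and>
     (\<forall>x. hmul mu eta x = x \<and> hmul mu x eta = x) \<and>
     \<comment> \<open>coassociativity: (\<Delta> \<otimes> id) \<Delta> = (id \<otimes> \<Delta>) \<Delta>\<close>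
     (\<forall>x. hv_lin (\<lambda>(a, c). hv_lin (\<lambda>(p, q). hv_basis (p, q, c)) (delta a)) (hDelta delta x)
        = hv_lin (\<lambda>(a, c). hv_tens (hv_basis a) (delta c)) (hDelta delta x)) \<and>
     \<comment> \<open>counit\<close>
     (\<forall>x. hv_lin (\<lambda>(a, c). hv_smul (eps a) (hv_basis c)) (hDelta delta x) = x \<and>
          hv_lin (\<lambda>(a, c). hv_smul (eps c) (hv_basis a)) (hDelta delta x) = x) \<and>
     \<comment> \<open>\<Delta> and \<epsilon> are algebra maps\<close>
     (\<forall>x y. hDelta delta (hmul mu x y) = hmul2 mu (hDelta delta x) (hDelta delta y)) \<and>
     hDelta delta eta = hv_tens eta eta \<and>
     (\<forall>x y. hv_fun eps (hmul mu x y) = hv_fun eps x * hv_fun eps y) \<and>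
     hv_fun eps eta = 1 \<and>
     \<comment> \<open>antipode: S(x_1) x_2 = \<epsilon>(x) 1 = x_1 S(x_2)\<close>
     (\<forall>x. hv_lin (\<lambda>(a, c). hmul mu (hS S (hv_basis a)) (hv_basis c)) (hDelta delta x)
            = hv_smul (hv_fun eps x) eta \<and>
          hv_lin (\<lambda>(a, c). hmul mu (hv_basis a) (hS S (hv_basis c))) (hDelta delta x)
            = hv_smul (hv_fun eps x) eta) \<and>
     \<comment> \<open>bijective antipode\<close>
     bij (hS S)"

definition hcentral :: "('b \<Rightarrow> 'b \<Rightarrow> ('b \<Rightarrow>\<^sub>0 'k::field)) \<Rightarrow> ('b \<Rightarrow>\<^sub>0 'k) \<Rightarrow> bool" where
  "hcentral mu z \<longleftrightarrow> (\<forall>x. hmul mu z x = hmul mu x z)"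

definition in_H_tensor_Z :: "('b \<Rightarrow> 'b \<Rightarrow> ('b \<Rightarrow>\<^sub>0 'k::field)) \<Rightarrow> ('b \<times> 'b \<Rightarrow>\<^sub>0 'k) \<Rightarrow> bool" where
  "in_H_tensor_Z mu t \<longleftrightarrow>
     (\<exists>ps. (\<forall>(a, z)\<in>set ps. hcentral mu z) \<and> t = sum_list (map (\<lambda>(a, z). hv_tens a z) ps))"

text \<open>Iterated coproduct h_1 \<otimes> h_2 \<otimes> h_3 = (\<Delta> \<otimes> id) \<Delta>(h).\<close>
definition hDelta2 :: "('b \<Rightarrow> ('b \<times> 'b \<Rightarrow>\<^sub>0 'k::field)) \<Rightarrow> ('b \<Rightarrow>\<^sub>0 'k) \<Rightarrow> ('b \<times> 'b \<times> 'b \<Rightarrow>\<^sub>0 'k)" where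
  "hDelta2 delta h = hv_lin (\<lambda>(a, c). hv_lin (\<lambda>(p, q). hv_basis (p, q, c)) (delta a)) (hDelta delta h)"

text \<open>\<nu>(h) = R^(2) h_2 R'^(2) \<otimes> S(h_1) S(R^(1)) h_3 R'^(1).\<close>
definition hnu :: "('b \<Rightarrow> 'b \<Rightarrow> ('b \<Rightarrow>\<^sub>0 'k::field)) \<Rightarrow> ('b \<Rightarrow> ('b \<times> 'b \<Rightarrow>\<^sub>0 'k))
    \<Rightarrow> ('b \<Rightarrow> ('b \<Rightarrow>\<^sub>0 'k)) \<Rightarrow> ('b \<times> 'b \<Rightarrow>\<^sub>0 'k) \<Rightarrow> ('b \<Rightarrow>\<^sub>0 'k) \<Rightarrow> ('b \<times> 'b \<Rightarrow>\<^sub>0 'k)" where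
  "hnu mu delta S R h =
     hv_lin (\<lambda>(r1, r2). hv_lin (\<lambda>(s1, s2). hv_lin (\<lambda>(a, b, c).
        hv_tens (hmul mu (hmul mu (hv_basis r2) (hv_basis b)) (hv_basis s2))
                (hmul mu (hmul mu (hmul mu (hS S (hv_basis a)) (hS S (hv_basis r1))) (hv_basis c)) (hv_basis s1)))
        (hDelta2 delta h)) R) R"

definition semiquasitriangular ::
  "('b \<Rightarrow> 'b \<Rightarrow> ('b \<Rightarrow>\<^sub>0 'k::field)) \<Rightarrow> ('b \<Rightarrow>\<^sub>0 'k) \<Rightarrow> ('b \<Rightarrow> ('b \<times> 'b \<Rightarrow>\<^sub>0 'k))
    \<Rightarrow> ('b \<Rightarrow> 'k) \<Rightarrow> ('b \<Rightarrow> ('b \<Rightarrow>\<^sub>0 'k)) \<Rightarrow> ('b \<times> 'b \<Rightarrow>\<^sub>0 'k) \<Rightarrow> bool" where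
  "semiquasitriangular mu eta delta eps S R \<longleftrightarrow>
     hopf_algebra mu eta delta eps S \<and>
     \<comment> \<open>R invertible in H \<otimes> H\<close>
     (\<exists>R'. hmul2 mu R R' = hv_tens eta eta \<and> hmul2 mu R' R = hv_tens eta eta) \<and>
     \<comment> \<open>(1) R^(1)_1 \<otimes> R^(1)_2 \<otimes> R^(2) = R^(1) \<otimes> R'^(1) \<otimes> R^(2) R'^(2)\<close>
     hv_lin (\<lambda>(r1, r2). hv_lin (\<lambda>(p, q). hv_basis (p, q, r2)) (delta r1)) R
       = hv_lin (\<lambda>(r1, r2). hv_lin (\<lambda>(s1, s2).
            hv_tens (hv_basis r1) (hv_tens (hv_basis s1) (hmul mu (hv_basis r2) (hv_basis s2)))) R) R \<and>
     \<comment> \<open>(2) R^(1) \<otimes> R^(2)_1 \<otimes> R^(2)_2 = R^(1) R'^(1) \<otimes> R'^(2) \<otimes> R^(2)\<close>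
     hv_lin (\<lambda>(r1, r2). hv_tens (hv_basis r1) (delta r2)) R
       = hv_lin (\<lambda>(r1, r2). hv_lin (\<lambda>(s1, s2).
            hv_tens (hmul mu (hv_basis r1) (hv_basis s1)) (hv_tens (hv_basis s2) (hv_basis r2))) R) R \<and>
     \<comment> \<open>(3) R^(1) \<otimes> R^(2)_2 R'^(1) \<otimes> R^(2)_1 R'^(2) = R^(1) \<otimes> R'^(1) R^(2)_1 \<otimes> R'^(2) R^(2)_2\<close>
     hv_lin (\<lambda>(r1, r2). hv_lin (\<lambda>(s1, s2). hv_lin (\<lambda>(p, q).
            hv_tens (hv_basis r1) (hv_tens (hmul mu (hv_basis q) (hv_basis s1)) (hmul mu (hv_basis p) (hv_basis s2))))
          (delta r2)) R) R
       = hv_lin (\<lambda>(r1, r2). hv_lin (\<lambda>(s1, s2). hv_lin (\<lambda>(p, q).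
            hv_tens (hv_basis r1) (hv_tens (hmul mu (hv_basis s1) (hv_basis p)) (hmul mu (hv_basis s2) (hv_basis q))))
          (delta r2)) R) R \<and>
     \<comment> \<open>(4) R^(1)_2 R'^(1) \<otimes> R^(1)_1 R'^(2) \<otimes> R^(2) = R'^(1) R^(1)_1 \<otimes> R'^(2) R^(1)_2 \<otimes> R^(2)\<close>
     hv_lin (\<lambda>(r1, r2). hv_lin (\<lambda>(s1, s2). hv_lin (\<lambda>(p, q).
            hv_tens (hmul mu (hv_basis q) (hv_basis s1)) (hv_tens (hmul mu (hv_basis p) (hv_basis s2)) (hv_basis r2)))
          (delta r1)) R) R
       = hv_lin (\<lambda>(r1, r2). hv_lin (\<lambda>(s1, s2). hv_lin (\<lambda>(p, q).
            hv_tens (hmul mu (hv_basis s1) (hv_basis p)) (hv_tens (hmul mu (hv_basis s2) (hv_basis q)) (hv_basis r2)))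
          (delta r1)) R) R \<and>
     \<comment> \<open>(5) \<nu>(h) \<in> H \<otimes> Z(H)\<close>
     (\<forall>h. in_H_tensor_Z mu (hnu mu delta S R h)) \<and>
     \<comment> \<open>(6) \<nu>(h) = R^(1) h_2 R'^(1) \<otimes> S(R'^(2)) S(h_1) R^(2) h_3\<close>
     (\<forall>h. hnu mu delta S R h =
        hv_lin (\<lambda>(r1, r2). hv_lin (\<lambda>(s1, s2). hv_lin (\<lambda>(a, b, c).
          hv_tens (hmul mu (hmul mu (hv_basis r1) (hv_basis b)) (hv_basis s1))
                  (hmul mu (hmul mu (hmul mu (hS S (hv_basis s2)) (hS S (hv_basis a))) (hv_basis r2)) (hv_basis c)))
          (hDelta2 delta h)) R) R)"

definition drinfeld_u :: "('b \<Rightarrow> 'b \<Rightarrow> ('b \<Rightarrow>\<^sub>0 'k::field)) \<Rightarrow> ('b \<Rightarrow> ('b \<Rightarrow>\<^sub>0 'k))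
    \<Rightarrow> ('b \<times> 'b \<Rightarrow>\<^sub>0 'k) \<Rightarrow> ('b \<Rightarrow>\<^sub>0 'k)" where
  "drinfeld_u mu S R = hv_lin (\<lambda>(r1, r2). hmul mu (hS S (hv_basis r2)) (hv_basis r1)) R"

end

theory Submission
  imports Defs
begin

text \<open>
  By (1) and the antipode axiom, (S \<otimes> id)(R) is a left inverse of R; by (2), (S \<otimes> S)(R) is a
  left inverse of (S \<otimes> id)(R). Hence (S \<otimes> S)(R) = R, which turns u = S(R^(2)) R^(1) into
  S^2(u) = u, and S^2(u^-1) = u^-1 follows because S^2 is multiplicative.
  For the commutation, expand u y = S^2(y_3) S(y_2) u y_1 and use (2) with (3), resp. (1) with (4),
  to obtain R^(1) \<otimes> u R^(2) = R^(1) \<otimes> S^2(R^(2)) u and u R^(1) \<otimes> R^(2) = S^2(R^(1)) u \<otimes> R^(2).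
  With S(u) = R^(1) S(R^(2)) this gives
  u S(u) = S^2(R^(1)) u S(R^(2)) = S(R^(1)) u R^(2) = S(R^(1)) S^2(R^(2)) u = S(u) u.
  Only (1)-(4) and a right inverse of R are used.
\<close>

section \<open>Finitely supported vectors and linear maps\<close>

lemma lookup_hv_smul [simp]: "Poly_Mapping.lookup (hv_smul c x) a = c * Poly_Mapping.lookup x a"
  unfolding hv_smul_def by (simp add: Poly_Mapping.map.rep_eq when_def)

lemma hv_smul_add_right: "hv_smul c (x + y) = hv_smul c x + hv_smul c y"
  by (rule poly_mapping_eqI) (simp add: lookup_add algebra_simps)

lemma hv_smul_add_left: "hv_smul (c + d) x = hv_smul c x + hv_smul d x"
  by (rule poly_mapping_eqI) (simp add: lookup_add algebra_simps)

lemma hv_smul_hv_smul: "hv_smul c (hv_smul d x) = hv_smul (c * d) x"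
  by (rule poly_mapping_eqI) (simp add: algebra_simps)

lemma hv_smul_zero_left [simp]: "hv_smul 0 x = 0"
  by (rule poly_mapping_eqI) simp

lemma hv_smul_one [simp]: "hv_smul 1 x = x"
  by (rule poly_mapping_eqI) simp

lemma hv_smul_sum: "hv_smul c (sum f A) = (\<Sum>a\<in>A. hv_smul c (f a))"
  by (rule poly_mapping_eqI) (simp add: lookup_sum sum_distrib_left)

lemma keys_hv_smul: "Poly_Mapping.keys (hv_smul c x) \<subseteq> Poly_Mapping.keys x"
  by (auto simp: in_keys_iff)

lemma hv_lin_superset:
  assumes "finite A" "Poly_Mapping.keys x \<subseteq> A"
  shows "hv_lin f x = (\<Sum>a\<in>A. hv_smul (Poly_Mapping.lookup x a) (f a))"
  unfolding hv_lin_def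
  by (rule sum.mono_neutral_left) (use assms in \<open>auto simp: in_keys_iff\<close>)

lemma hv_lin_add: "hv_lin f (x + y) = hv_lin f x + hv_lin f y"
proof -
  have fin: "finite (Poly_Mapping.keys x \<union> Poly_Mapping.keys y)" by simp
  have "Poly_Mapping.keys (x + y) \<subseteq> Poly_Mapping.keys x \<union> Poly_Mapping.keys y" by (rule keys_add)
  then show ?thesis
    by (simp add: hv_lin_superset[OF fin] lookup_add hv_smul_add_left sum.distrib)
qed

lemma hv_lin_smul: "hv_lin f (hv_smul c x) = hv_smul c (hv_lin f x)"
  using keys_hv_smul[of c x]
  by (simp add: hv_lin_superset[of "Poly_Mapping.keys x"] hv_smul_sum hv_smul_hv_smul)

lemma hv_lin_basis [simp]: "hv_lin f (hv_basis a) = f a"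
  by (simp add: hv_lin_def hv_basis_def)

lemma hv_lin_basis_id: "hv_lin hv_basis x = x"
proof (rule poly_mapping_eqI)
  fix k
  show "Poly_Mapping.lookup (hv_lin hv_basis x) k = Poly_Mapping.lookup x k"
    unfolding hv_lin_def hv_basis_def
    by (simp add: lookup_sum lookup_single when_def in_keys_iff if_distrib[of "(*) _"] sum.delta
        cong: if_cong)
qed

lemma hv_lin_pair_basis: "hv_lin (\<lambda>(a, b). hv_tens (hv_basis a) (hv_basis b)) T = T"
  by (simp add: hv_tens_def hv_lin_basis_id split_def)

lemma hv_lin_add_fun: "hv_lin (\<lambda>a. f a + g a) x = hv_lin f x + hv_lin g x"
  by (simp add: hv_lin_def hv_smul_add_right sum.distrib)

lemma hv_lin_smul_fun: "hv_lin (\<lambda>a. hv_smul c (f a)) x = hv_smul c (hv_lin f x)"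
  by (simp add: hv_lin_def hv_smul_sum hv_smul_hv_smul mult.commute)

lemma hv_lin_swap:
  "hv_lin (\<lambda>a. hv_lin (\<lambda>b. F a b) y) x = hv_lin (\<lambda>b. hv_lin (\<lambda>a. F a b) x) y"
  unfolding hv_lin_def
  by (simp add: hv_smul_sum hv_smul_hv_smul mult.commute sum.swap[of _ _ "Poly_Mapping.keys x"])

lemma hv_lin_swap_pairs:
  "hv_lin (\<lambda>(a1, a2). hv_lin (\<lambda>(b1, b2). F a1 a2 b1 b2) Y) X =
   hv_lin (\<lambda>(b1, b2). hv_lin (\<lambda>(a1, a2). F a1 a2 b1 b2) X) Y"
  using hv_lin_swap[of "\<lambda>a b. F (fst a) (snd a) (fst b) (snd b)" Y X]
  by (simp add: split_def)

lemma hv_lin_cong_pairs: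
  "(\<And>a b. f a b = g a b) \<Longrightarrow> hv_lin (\<lambda>(a, b). f a b) x = hv_lin (\<lambda>(a, b). g a b) x"
  by simp

definition hv_linear :: "(('a \<Rightarrow>\<^sub>0 'k::field) \<Rightarrow> ('c \<Rightarrow>\<^sub>0 'k)) \<Rightarrow> bool" where
  "hv_linear L \<longleftrightarrow> (\<forall>x y. L (x + y) = L x + L y) \<and> (\<forall>c x. L (hv_smul c x) = hv_smul c (L x))"

lemma hv_linearD:
  "hv_linear L \<Longrightarrow> L (x + y) = L x + L y"
  "hv_linear L \<Longrightarrow> L (hv_smul c x) = hv_smul c (L x)"
  by (auto simp: hv_linear_def)

lemma hv_linear_zero: "hv_linear L \<Longrightarrow> L 0 = 0"
  by (metis hv_smul_zero_left hv_linearD(2))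

lemma hv_linear_sum: "hv_linear L \<Longrightarrow> L (sum f A) = (\<Sum>a\<in>A. L (f a))"
  by (induction A rule: infinite_finite_induct) (auto simp: hv_linear_zero hv_linearD)

lemma hv_linear_hv_lin: "hv_linear L \<Longrightarrow> L (hv_lin f x) = hv_lin (\<lambda>a. L (f a)) x"
  by (simp add: hv_lin_def hv_linear_sum hv_linearD)

lemma hv_linear_hv_lin_pairs:
  "hv_linear L \<Longrightarrow> L (hv_lin (\<lambda>(a, b). F a b) X) = hv_lin (\<lambda>(a, b). L (F a b)) X"
  by (simp add: hv_linear_hv_lin prod.case_distrib)

lemma hv_lin_linear_basis: "hv_linear L \<Longrightarrow> hv_lin (\<lambda>a. L (hv_basis a)) x = L x"
  using hv_linear_hv_lin[of L hv_basis x] by (simp add: hv_lin_basis_id)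

lemma hv_linear_eq_on_basis:
  assumes "hv_linear F" "hv_linear G" "\<And>a. F (hv_basis a) = G (hv_basis a)"
  shows "F x = G x"
  using hv_linear_hv_lin[OF assms(1), of hv_basis x] hv_linear_hv_lin[OF assms(2), of hv_basis x]
  by (simp add: hv_lin_basis_id assms(3))

lemma hv_lin_comp: "hv_lin g (hv_lin f x) = hv_lin (\<lambda>a. hv_lin g (f a)) x"
  by (rule hv_linear_hv_lin) (simp add: hv_linear_def hv_lin_add hv_lin_smul)

lemma hv_linear_id: "hv_linear (\<lambda>x. x)"
  by (simp add: hv_linear_def)

lemma hv_linear_hv_lin_comp: "hv_linear f \<Longrightarrow> hv_linear (\<lambda>x. hv_lin g (f x))"
  by (simp add: hv_linear_def hv_lin_add hv_lin_smul)

lemma hv_linear_smul: "hv_linear f \<Longrightarrow> hv_linear (\<lambda>x. hv_smul c (f x))"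
  by (simp add: hv_linear_def hv_smul_add_right hv_smul_hv_smul mult.commute)

lemma hv_linear_hv_lin_fun: "(\<And>a. hv_linear (\<lambda>x. G a x)) \<Longrightarrow> hv_linear (\<lambda>x. hv_lin (\<lambda>a. G a x) y)"
  by (simp add: hv_linear_def hv_lin_add_fun hv_lin_smul_fun)

lemma hv_linear_case_prod:
  "(\<And>a b. hv_linear (\<lambda>x. G a b x)) \<Longrightarrow> hv_linear (\<lambda>x. case p of (a, b) \<Rightarrow> G a b x)"
  by (cases p) simp

lemma hv_linear_tens_left: "hv_linear f \<Longrightarrow> hv_linear (\<lambda>x. hv_tens (f x) y)"
  unfolding hv_tens_def by (rule hv_linear_hv_lin_comp)

lemma hv_linear_tens_right: "hv_linear f \<Longrightarrow> hv_linear (\<lambda>x. hv_tens y (f x))"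
  unfolding hv_tens_def by (intro hv_linear_hv_lin_fun hv_linear_hv_lin_comp)

lemma hv_linear_hmul_left: "hv_linear f \<Longrightarrow> hv_linear (\<lambda>x. hmul mu (f x) y)"
  unfolding hmul_def by (rule hv_linear_hv_lin_comp)

lemma hv_linear_hmul_right: "hv_linear f \<Longrightarrow> hv_linear (\<lambda>x. hmul mu y (f x))"
  unfolding hmul_def by (intro hv_linear_hv_lin_fun hv_linear_hv_lin_comp)

lemma hv_linear_hS: "hv_linear f \<Longrightarrow> hv_linear (\<lambda>x. hS S (f x))"
  unfolding hS_def by (rule hv_linear_hv_lin_comp)

lemma hv_linear_hmul2_left: "hv_linear f \<Longrightarrow> hv_linear (\<lambda>x. hmul2 mu (f x) y)"
  unfolding hmul2_def by (rule hv_linear_hv_lin_comp)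

lemma hv_linear_hmul2_right: "hv_linear f \<Longrightarrow> hv_linear (\<lambda>x. hmul2 mu y (f x))"
  unfolding hmul2_def by (intro hv_linear_hv_lin_fun hv_linear_case_prod hv_linear_hv_lin_comp)

lemma hv_linear_comp: "hv_linear L \<Longrightarrow> hv_linear f \<Longrightarrow> hv_linear (\<lambda>x. L (f x))"
  by (simp add: hv_linear_def)

lemmas hv_linear_intros = hv_linear_id hv_linear_hv_lin_comp hv_linear_smul
  hv_linear_hv_lin_fun hv_linear_case_prod hv_linear_tens_left hv_linear_tens_right
  hv_linear_hmul_left hv_linear_hmul_right hv_linear_hS hv_linear_hmul2_left hv_linear_hmul2_right

lemma hv_lin_tens: "hv_lin F (hv_tens x y) = hv_lin (\<lambda>a. hv_lin (\<lambda>c. F (a, c)) y) x"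
  unfolding hv_tens_def by (simp add: hv_lin_comp)

lemma hv_tens_basis [simp]: "hv_tens (hv_basis a) (hv_basis c) = hv_basis (a, c)"
  unfolding hv_tens_def by simp

lemma hv_tens_basis_pair: "hv_basis p = hv_tens (hv_basis (fst p)) (hv_basis (snd p))"
  by (cases p) simp

lemma hv_lin_bilinear:
  assumes "\<And>y. hv_linear (\<lambda>x. \<Phi> x y)" "\<And>x. hv_linear (\<lambda>y. \<Phi> x y)"
  shows "\<Phi> (hv_lin f x) (hv_lin g y) = hv_lin (\<lambda>a. hv_lin (\<lambda>b. \<Phi> (f a) (g b)) y) x"
  by (subst hv_linear_hv_lin[OF assms(1)]) (simp add: hv_linear_hv_lin[OF assms(2)])

lemma hv_lin_tens_bilinear:
  assumes "\<And>y. hv_linear (\<lambda>x. \<Phi> x y)" "\<And>x. hv_linear (\<lambda>y. \<Phi> x y)"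
  shows "hv_lin (\<lambda>(a, b). \<Phi> (hv_basis a) (hv_basis b)) (hv_tens x y) = \<Phi> x y"
  using hv_lin_bilinear[OF assms, of hv_basis x hv_basis y]
  by (simp add: hv_lin_basis_id hv_lin_tens)

lemma hv_tens_smul_left: "hv_tens (hv_smul c x) y = hv_smul c (hv_tens x y)"
  by (rule hv_linearD(2)[OF hv_linear_tens_left[OF hv_linear_id]])

lemma hv_tens_smul_right: "hv_tens x (hv_smul c y) = hv_smul c (hv_tens x y)"
  by (rule hv_linearD(2)[OF hv_linear_tens_right[OF hv_linear_id]])

lemma hmul_smul_left: "hmul mu (hv_smul c x) y = hv_smul c (hmul mu x y)"
  by (rule hv_linearD(2)[OF hv_linear_hmul_left[OF hv_linear_id]])

lemma hv_tens_hv_lin_left: "hv_tens (hv_lin f x) y = hv_lin (\<lambda>a. hv_tens (f a) y) x"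
  by (rule hv_linear_hv_lin[OF hv_linear_tens_left[OF hv_linear_id]])

lemma hv_tens_hv_lin_right: "hv_tens x (hv_lin f y) = hv_lin (\<lambda>a. hv_tens x (f a)) y"
  by (rule hv_linear_hv_lin[OF hv_linear_tens_right[OF hv_linear_id]])

lemma hv_bilinear_eq_on_basis:
  assumes "\<And>y. hv_linear (\<lambda>x. F x y)" "\<And>x. hv_linear (\<lambda>y. F x y)"
    and "\<And>y. hv_linear (\<lambda>x. G x y)" "\<And>x. hv_linear (\<lambda>y. G x y)"
    and "\<And>a b. F (hv_basis a) (hv_basis b) = G (hv_basis a) (hv_basis b)"
  shows "F x y = G x y"
proof -
  have "F (hv_basis a) y = G (hv_basis a) y" for a
    by (rule hv_linear_eq_on_basis[OF assms(2) assms(4) assms(5)])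
  then show ?thesis
    by (rule hv_linear_eq_on_basis[OF assms(1) assms(3)])
qed

lemma hv_fun_add: "hv_fun f (x + y) = hv_fun f x + hv_fun f y"
proof -
  have sup: "hv_fun f z =
      (\<Sum>a\<in>Poly_Mapping.keys x \<union> Poly_Mapping.keys y. Poly_Mapping.lookup z a * f a)"
    if "Poly_Mapping.keys z \<subseteq> Poly_Mapping.keys x \<union> Poly_Mapping.keys y" for z
    unfolding hv_fun_def by (rule sum.mono_neutral_left) (use that in \<open>auto simp: in_keys_iff\<close>)
  show ?thesis
    using keys_add[of x y] by (simp add: sup lookup_add algebra_simps sum.distrib)
qed

lemma hv_fun_smul: "hv_fun f (hv_smul c x) = c * hv_fun f x"
proof -
  have "hv_fun f (hv_smul c x) =
      (\<Sum>a\<in>Poly_Mapping.keys x. Poly_Mapping.lookup (hv_smul c x) a * f a)"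
    unfolding hv_fun_def by (rule sum.mono_neutral_left) (auto simp: in_keys_iff)
  also have "\<dots> = c * hv_fun f x" by (simp add: hv_fun_def sum_distrib_left algebra_simps)
  finally show ?thesis .
qed

lemma hv_fun_basis [simp]: "hv_fun f (hv_basis a) = f a"
  by (simp add: hv_fun_def hv_basis_def)

lemma hv_lin_functional_tens_left:
  "hv_lin (\<lambda>(a, b). hv_smul (f a) (hv_basis b)) (hv_tens x y) = hv_smul (hv_fun f x) y"
  using hv_lin_tens_bilinear[where \<Phi>="\<lambda>u v. hv_smul (hv_fun f u) v"]
  by (auto simp: hv_linear_def hv_fun_add hv_fun_smul hv_smul_add_left hv_smul_add_right
      hv_smul_hv_smul mult.commute)

lemma hv_lin_functional_tens_right:
  "hv_lin (\<lambda>(a, b). hv_smul (f b) (hv_basis a)) (hv_tens x y) = hv_smul (hv_fun f y) x"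
  using hv_lin_tens_bilinear[where \<Phi>="\<lambda>u v. hv_smul (hv_fun f v) u"]
  by (auto simp: hv_linear_def hv_fun_add hv_fun_smul hv_smul_add_left hv_smul_add_right
      hv_smul_hv_smul mult.commute)

section \<open>Hopf algebras\<close>

locale hopf =
  fixes mu :: "'b \<Rightarrow> 'b \<Rightarrow> ('b \<Rightarrow>\<^sub>0 'k::field)"
    and eta :: "'b \<Rightarrow>\<^sub>0 'k"
    and delta :: "'b \<Rightarrow> ('b \<times> 'b \<Rightarrow>\<^sub>0 'k)"
    and eps :: "'b \<Rightarrow> 'k"
    and S :: "'b \<Rightarrow> ('b \<Rightarrow>\<^sub>0 'k)"
  assumes hopf_algebra: "hopf_algebra mu eta delta eps S"
begin

abbreviation m where "m \<equiv> hmul mu"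
abbreviation Sv where "Sv \<equiv> hS S"
abbreviation e :: "'a \<Rightarrow> ('a \<Rightarrow>\<^sub>0 'k)" where "e \<equiv> hv_basis"

lemma mult_assoc: "m (m x y) z = m x (m y z)"
  using hopf_algebra unfolding hopf_algebra_def by blast

lemma mult_unit_left [simp]: "m eta x = x"
  using hopf_algebra unfolding hopf_algebra_def by blast

lemma mult_unit_right [simp]: "m x eta = x"
  using hopf_algebra unfolding hopf_algebra_def by blast

lemma mult_basis: "m (e a) (e b) = mu a b"
  by (simp add: hmul_def)

lemma hv_linear_mult_left: "hv_linear (\<lambda>x. m x y)"
  by (intro hv_linear_intros)

lemma hv_linear_mult_right: "hv_linear (\<lambda>y. m x y)"
  by (intro hv_linear_intros)

lemma hv_linear_antipode: "hv_linear Sv"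
  using hv_linear_hS[OF hv_linear_id, of S] by simp

lemma mult_hv_lin_left: "m (hv_lin f x) y = hv_lin (\<lambda>a. m (f a) y) x"
  by (rule hv_linear_hv_lin[OF hv_linear_mult_left])

lemma mult_hv_lin_right: "m y (hv_lin f x) = hv_lin (\<lambda>a. m y (f a)) x"
  by (rule hv_linear_hv_lin[OF hv_linear_mult_right])

lemma antipode_hv_lin: "Sv (hv_lin f x) = hv_lin (\<lambda>a. Sv (f a)) x"
  by (rule hv_linear_hv_lin[OF hv_linear_antipode])

lemma coassoc:
  "hv_lin (\<lambda>(a, c). hv_lin (\<lambda>(p, q). F p q c) (delta a)) (delta b) =
   hv_lin (\<lambda>(a, c). hv_lin (\<lambda>(p, q). F a p q) (delta c)) (delta b)"
proof -
  have "hv_lin (\<lambda>(a, c). hv_lin (\<lambda>(p, q). e (p, q, c)) (delta a)) (delta b)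
      = hv_lin (\<lambda>(a, c). hv_tens (e a) (delta c)) (delta b)"
    using hopf_algebra hv_lin_basis[of delta b] unfolding hopf_algebra_def hDelta_def by metis
  then have "hv_lin (\<lambda>(p, q, c). F p q c)
        (hv_lin (\<lambda>(a, c). hv_lin (\<lambda>(p, q). e (p, q, c)) (delta a)) (delta b))
      = hv_lin (\<lambda>(p, q, c). F p q c) (hv_lin (\<lambda>(a, c). hv_tens (e a) (delta c)) (delta b))"
    by (rule arg_cong)
  then show ?thesis
    by (simp add: hv_lin_comp prod.case_distrib hv_lin_tens split_def)
qed

lemma counit_left: "hv_lin (\<lambda>(a, c). hv_smul (eps a) (G c)) (delta b) = G b"
proof -
  have "hv_lin (\<lambda>(a, c). hv_smul (eps a) (e c)) (delta b) = e b"
    using hopf_algebra hv_lin_basis[of delta b] unfolding hopf_algebra_def hDelta_def by metis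
  then have "hv_lin G (hv_lin (\<lambda>(a, c). hv_smul (eps a) (e c)) (delta b)) = G b"
    by simp
  then show ?thesis
    by (simp add: hv_lin_comp prod.case_distrib hv_lin_smul)
qed

lemma counit_right: "hv_lin (\<lambda>(a, c). hv_smul (eps c) (G a)) (delta b) = G b"
proof -
  have "hv_lin (\<lambda>(a, c). hv_smul (eps c) (e a)) (delta b) = e b"
    using hopf_algebra hv_lin_basis[of delta b] unfolding hopf_algebra_def hDelta_def by metis
  then have "hv_lin G (hv_lin (\<lambda>(a, c). hv_smul (eps c) (e a)) (delta b)) = G b"
    by simp
  then show ?thesis
    by (simp add: hv_lin_comp prod.case_distrib hv_lin_smul)
qed

lemma counit_left_twice:
  "hv_lin (\<lambda>(x, a'). hv_lin (\<lambda>(y, b'). hv_smul (eps x * eps y) (G a' b')) (delta b)) (delta a)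
    = G a b"
  by (simp add: hv_smul_hv_smul[symmetric] counit_left
      hv_linear_hv_lin_pairs[OF hv_linear_smul[OF hv_linear_id], symmetric])

lemma counit_right_twice:
  "hv_lin (\<lambda>(a', x). hv_lin (\<lambda>(b', y). hv_smul (eps x * eps y) (G a' b')) (delta b)) (delta a)
    = G a b"
  by (simp add: hv_smul_hv_smul[symmetric] counit_right
      hv_linear_hv_lin_pairs[OF hv_linear_smul[OF hv_linear_id], symmetric])

lemma comult_mult: "hDelta delta (m x y) = hmul2 mu (hDelta delta x) (hDelta delta y)"
  using hopf_algebra unfolding hopf_algebra_def by blast

lemma comult_unit: "hDelta delta eta = hv_tens eta eta"
  using hopf_algebra unfolding hopf_algebra_def by blast

lemma counit_mult: "hv_fun eps (m x y) = hv_fun eps x * hv_fun eps y"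
  using hopf_algebra unfolding hopf_algebra_def by blast

lemma counit_unit: "hv_fun eps eta = 1"
  using hopf_algebra unfolding hopf_algebra_def by blast

lemma antipode_hDelta:
  "hv_lin (\<lambda>(a, c). m (Sv (e a)) (e c)) (hDelta delta x) = hv_smul (hv_fun eps x) eta"
  "hv_lin (\<lambda>(a, c). m (e a) (Sv (e c))) (hDelta delta x) = hv_smul (hv_fun eps x) eta"
  using hopf_algebra unfolding hopf_algebra_def by blast+

lemma antipode_left_hDelta:
  assumes "hv_linear L"
  shows "hv_lin (\<lambda>(a, c). L (m (Sv (e a)) (e c))) (hDelta delta x) = hv_smul (hv_fun eps x) (L eta)"
  using hv_linear_hv_lin_pairs[OF assms, of "\<lambda>a c. m (Sv (e a)) (e c)", symmetric]
  by (simp add: antipode_hDelta hv_linearD[OF assms])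

lemma antipode_left:
  "hv_linear L \<Longrightarrow> hv_lin (\<lambda>(a, c). L (m (Sv (e a)) (e c))) (delta b) = hv_smul (eps b) (L eta)"
  using antipode_left_hDelta[of L "e b"] by (simp add: hDelta_def)

lemma antipode_right:
  assumes "hv_linear L"
  shows "hv_lin (\<lambda>(a, c). L (m (e a) (Sv (e c)))) (delta b) = hv_smul (eps b) (L eta)"
  using hv_linear_hv_lin_pairs[OF assms, of "\<lambda>a c. m (e a) (Sv (e c))", symmetric]
    antipode_hDelta(2)[of "e b"]
  by (simp add: hv_linearD[OF assms] hDelta_def)

lemma comult_mult_basis:
  assumes "\<And>y. hv_linear (\<lambda>x. \<Phi> x y)" "\<And>x. hv_linear (\<lambda>y. \<Phi> x y)"
  shows "hv_lin (\<lambda>(p, q). \<Phi> (e p) (e q)) (hDelta delta (m (e a) (e b))) =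
    hv_lin (\<lambda>(a1, a2). hv_lin (\<lambda>(b1, b2). \<Phi> (m (e a1) (e b1)) (m (e a2) (e b2))) (delta b))
      (delta a)"
  unfolding comult_mult hmul2_def
  by (simp add: hv_lin_comp prod.case_distrib hv_lin_tens_bilinear[OF assms] hDelta_def mult_basis)

lemma antipode_mult_left:
  assumes "hv_linear L"
  shows "hv_lin (\<lambda>(a1, a2). hv_lin (\<lambda>(b1, b2). L (m (Sv (m (e a1) (e b1))) (m (e a2) (e b2))))
      (delta b)) (delta a)
     = hv_smul (eps a * eps b) (L eta)"
proof -
  have "hv_lin (\<lambda>(a1, a2). hv_lin (\<lambda>(b1, b2). L (m (Sv (m (e a1) (e b1))) (m (e a2) (e b2))))
      (delta b)) (delta a)
      = hv_lin (\<lambda>(p, q). L (m (Sv (e p)) (e q))) (hDelta delta (m (e a) (e b)))"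
    by (rule comult_mult_basis[where \<Phi>="\<lambda>u v. L (m (Sv u) v)", symmetric])
      (rule hv_linear_comp[OF assms] hv_linear_intros)+
  also have "\<dots> = hv_smul (eps a * eps b) (L eta)"
    by (simp add: antipode_left_hDelta[OF assms] counit_mult)
  finally show ?thesis .
qed

lemma mult_antipode_right:
  assumes "hv_linear L"
  shows "hv_lin (\<lambda>(a1, a2). hv_lin (\<lambda>(b1, b2). L (m (m (e a1) (e b1)) (m (Sv (e b2)) (Sv (e a2)))))
      (delta b)) (delta a)
     = hv_smul (eps a * eps b) (L eta)"
proof -
  have "hv_lin (\<lambda>(b1, b2). L (m (m (e a1) (e b1)) (m (Sv (e b2)) (Sv (e a2))))) (delta b)
      = hv_smul (eps b) (L (m (e a1) (Sv (e a2))))" for a1 a2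
  proof -
    have "hv_linear (\<lambda>z. L (m (e a1) (m z (Sv (e a2)))))"
      by (rule hv_linear_comp[OF assms] hv_linear_intros)+
    from antipode_right[OF this] show ?thesis by (simp add: mult_assoc)
  qed
  then have "hv_lin (\<lambda>(a1, a2). hv_lin (\<lambda>(b1, b2).
        L (m (m (e a1) (e b1)) (m (Sv (e b2)) (Sv (e a2))))) (delta b)) (delta a)
      = hv_smul (eps b) (hv_lin (\<lambda>(a1, a2). L (m (e a1) (Sv (e a2)))) (delta a))"
    by (simp add: hv_linear_hv_lin_pairs[OF hv_linear_smul[OF hv_linear_id], symmetric])
  also have "\<dots> = hv_smul (eps a * eps b) (L eta)"
    by (simp add: antipode_right[OF assms] hv_smul_hv_smul mult.commute)
  finally show ?thesis .
qed

text \<open>The element S(a_1 b_1) a_2 b_2 S(b_3) S(a_3) equals both S(b) S(a) and S(ab), depending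
  on how coassociativity groups the factors.\<close>

lemma antipode_mult_basis: "Sv (m (e a) (e b)) = m (Sv (e b)) (Sv (e a))"
proof -
  define \<Phi> where "\<Phi> a1 a2 a3 b1 b2 b3 =
    m (m (m (Sv (m (e a1) (e b1))) (m (e a2) (e b2))) (Sv (e b3))) (Sv (e a3))"
    for a1 a2 a3 b1 b2 b3
  have inner_left: "hv_lin (\<lambda>(a1, a2). hv_lin (\<lambda>(b1, b2). \<Phi> a1 a2 a3 b1 b2 b3) (delta y)) (delta x)
      = hv_smul (eps x * eps y) (m (Sv (e b3)) (Sv (e a3)))" for x y a3 b3
    using antipode_mult_left[where L="\<lambda>z. m (m z (Sv (e b3))) (Sv (e a3))"]
    by (simp add: \<Phi>_def hv_linear_intros)
  have inner_right: "hv_lin (\<lambda>(a2, a3). hv_lin (\<lambda>(b2, b3). \<Phi> a1 a2 a3 b1 b2 b3) (delta y)) (delta x)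
      = hv_smul (eps x * eps y) (Sv (m (e a1) (e b1)))" for x y a1 b1
    using mult_antipode_right[where L="\<lambda>z. m (Sv (m (e a1) (e b1))) z"]
    by (simp add: \<Phi>_def mult_assoc hv_linear_intros)
  have "m (Sv (e b)) (Sv (e a)) = hv_lin (\<lambda>(x, a3). hv_lin (\<lambda>(y, b3).
      hv_lin (\<lambda>(a1, a2). hv_lin (\<lambda>(b1, b2). \<Phi> a1 a2 a3 b1 b2 b3) (delta y)) (delta x))
        (delta b)) (delta a)"
    by (simp only: inner_left counit_left_twice)
  also have "\<dots> = hv_lin (\<lambda>(x, a3). hv_lin (\<lambda>(a1, a2). hv_lin (\<lambda>(y, b3).
      hv_lin (\<lambda>(b1, b2). \<Phi> a1 a2 a3 b1 b2 b3) (delta y)) (delta b)) (delta x)) (delta a)"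
    by (rule hv_lin_cong_pairs, rule hv_lin_swap_pairs)
  also have "\<dots> = hv_lin (\<lambda>(a1, x). hv_lin (\<lambda>(a2, a3). hv_lin (\<lambda>(b1, y).
      hv_lin (\<lambda>(b2, b3). \<Phi> a1 a2 a3 b1 b2 b3) (delta y)) (delta b)) (delta x)) (delta a)"
    by (simp only: coassoc)
  also have "\<dots> = hv_lin (\<lambda>(a1, x). hv_lin (\<lambda>(b1, y).
      hv_lin (\<lambda>(a2, a3). hv_lin (\<lambda>(b2, b3). \<Phi> a1 a2 a3 b1 b2 b3) (delta y)) (delta x))
        (delta b)) (delta a)"
    by (rule hv_lin_cong_pairs, rule hv_lin_swap_pairs)
  also have "\<dots> = Sv (m (e a) (e b))"
    by (simp only: inner_right counit_right_twice)
  finally show ?thesis ..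
qed

lemma antipode_mult: "Sv (m x y) = m (Sv y) (Sv x)"
  by (rule hv_bilinear_eq_on_basis[where F="\<lambda>x y. Sv (m x y)" and G="\<lambda>x y. m (Sv y) (Sv x)"])
    ((rule hv_linear_intros)+, rule antipode_mult_basis)

lemma antipode_unit: "Sv eta = eta"
proof -
  have "hv_lin (\<lambda>(a, c). m (Sv (e a)) (e c)) (hDelta delta eta) = hv_smul (hv_fun eps eta) eta"
    by (rule antipode_hDelta)
  moreover have "hv_lin (\<lambda>(a, c). m (Sv (e a)) (e c)) (hv_tens eta eta) = m (Sv eta) eta"
    by (rule hv_lin_tens_bilinear[where \<Phi>="\<lambda>u v. m (Sv u) v"]) (rule hv_linear_intros)+
  ultimately show ?thesis by (simp add: comult_unit counit_unit)
qed

lemma hmul2_tens: "hmul2 mu (hv_tens x y) (hv_tens z w) = hv_tens (m x z) (m y w)"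
proof (rule hv_bilinear_eq_on_basis[where F="\<lambda>x y. hmul2 mu (hv_tens x y) (hv_tens z w)"
      and G="\<lambda>x y. hv_tens (m x z) (m y w)"])
  fix a b
  show "hmul2 mu (hv_tens (e a) (e b)) (hv_tens z w) = hv_tens (m (e a) z) (m (e b) w)"
    by (rule hv_bilinear_eq_on_basis[where F="\<lambda>z w. hmul2 mu (hv_tens (e a) (e b)) (hv_tens z w)"
          and G="\<lambda>z w. hv_tens (m (e a) z) (m (e b) w)"])
      ((rule hv_linear_intros)+, simp add: hmul2_def mult_basis)
qed (rule hv_linear_intros)+

lemma hmul2_assoc: "hmul2 mu (hmul2 mu X Y) Z = hmul2 mu X (hmul2 mu Y Z)"
proof -
  have basis: "hmul2 mu (hmul2 mu (e p) (e q)) (e r) = hmul2 mu (e p) (hmul2 mu (e q) (e r))"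
    for p q r
    by (simp only: hv_tens_basis_pair[of p] hv_tens_basis_pair[of q] hv_tens_basis_pair[of r]
        hmul2_tens mult_assoc)
  have "hmul2 mu (hmul2 mu (e p) Y) Z = hmul2 mu (e p) (hmul2 mu Y Z)" for p
    by (rule hv_bilinear_eq_on_basis[where F="\<lambda>Y Z. hmul2 mu (hmul2 mu (e p) Y) Z"
          and G="\<lambda>Y Z. hmul2 mu (e p) (hmul2 mu Y Z)"])
      ((rule hv_linear_intros)+, rule basis)
  then show ?thesis
    by (rule hv_linear_eq_on_basis[where F="\<lambda>X. hmul2 mu (hmul2 mu X Y) Z"
          and G="\<lambda>X. hmul2 mu X (hmul2 mu Y Z)", rotated 2]) (rule hv_linear_intros)+
qed

lemma hmul2_unit_left: "hmul2 mu (hv_tens eta eta) X = X"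
proof -
  have "hmul2 mu (hv_tens eta eta) (e p) = e p" for p
    by (simp only: hv_tens_basis_pair[of p] hmul2_tens mult_unit_left)
  then show ?thesis
    by (rule hv_linear_eq_on_basis[where F="hmul2 mu (hv_tens eta eta)" and G="\<lambda>X. X", rotated 2])
      (rule hv_linear_intros)+
qed

lemma hmul2_unit_right: "hmul2 mu X (hv_tens eta eta) = X"
proof -
  have "hmul2 mu (e p) (hv_tens eta eta) = e p" for p
    by (simp only: hv_tens_basis_pair[of p] hmul2_tens mult_unit_right)
  then show ?thesis
    by (rule hv_linear_eq_on_basis[where F="\<lambda>X. hmul2 mu X (hv_tens eta eta)" and G="\<lambda>X. X",
          rotated 2])
      (rule hv_linear_intros)+
qed

lemma hmul2_hv_lin_tens:
  "hmul2 mu (hv_lin (\<lambda>(a, b). hv_tens (X a b) (Y a b)) T)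
     (hv_lin (\<lambda>(c, d). hv_tens (Z c d) (W c d)) U)
   = hv_lin (\<lambda>(a, b). hv_lin (\<lambda>(c, d). hv_tens (m (X a b) (Z c d)) (m (Y a b) (W c d))) U) T"
  by (subst hv_lin_bilinear[where \<Phi>="hmul2 mu"])
    ((rule hv_linear_intros)+, simp add: split_def hmul2_tens)

text \<open>The inserted factor S^2(y_3) S(y_2) = S(y_2 S(y_3)) collapses by the antipode axiom.\<close>

lemma mult_basis_expand:
  "m z (e y) = hv_lin (\<lambda>(x, r). hv_lin (\<lambda>(p, q).
     m (m (Sv (Sv (e r))) (Sv (e q))) (m z (e p))) (delta x)) (delta y)"
proof -
  have "hv_lin (\<lambda>(x, r). hv_lin (\<lambda>(p, q).
      m (m (Sv (Sv (e r))) (Sv (e q))) (m z (e p))) (delta x)) (delta y)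
    = hv_lin (\<lambda>(p, x). hv_lin (\<lambda>(q, r).
      m (m (Sv (Sv (e r))) (Sv (e q))) (m z (e p))) (delta x)) (delta y)"
    by (rule coassoc)
  also have "\<dots> = hv_lin (\<lambda>(p, x). hv_smul (eps x) (m z (e p))) (delta y)"
  proof (rule hv_lin_cong_pairs)
    fix p x
    have "hv_lin (\<lambda>(q, r). m (m (Sv (Sv (e r))) (Sv (e q))) (m z (e p))) (delta x)
       = hv_lin (\<lambda>(q, r). m (Sv (m (e q) (Sv (e r)))) (m z (e p))) (delta x)"
      by (simp add: antipode_mult)
    also have "\<dots> = hv_smul (eps x) (m (Sv eta) (m z (e p)))"
      by (rule antipode_right) (rule hv_linear_intros)+
    finally show "hv_lin (\<lambda>(q, r). m (m (Sv (Sv (e r))) (Sv (e q))) (m z (e p))) (delta x)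
        = hv_smul (eps x) (m z (e p))"
      by (simp add: antipode_unit)
  qed
  also have "\<dots> = m z (e y)" by (rule counit_right)
  finally show ?thesis ..
qed

end

section \<open>Semiquasitriangular Hopf algebras\<close>

locale semiquasitriangular_hopf =
  fixes mu :: "'b \<Rightarrow> 'b \<Rightarrow> ('b \<Rightarrow>\<^sub>0 'k::field)"
    and eta :: "'b \<Rightarrow>\<^sub>0 'k"
    and delta :: "'b \<Rightarrow> ('b \<times> 'b \<Rightarrow>\<^sub>0 'k)"
    and eps :: "'b \<Rightarrow> 'k"
    and S :: "'b \<Rightarrow> ('b \<Rightarrow>\<^sub>0 'k)"
    and R :: "'b \<times> 'b \<Rightarrow>\<^sub>0 'k"
  assumes semiquasitriangular: "semiquasitriangular mu eta delta eps S R"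

sublocale semiquasitriangular_hopf \<subseteq> hopf
  using semiquasitriangular by unfold_locales (simp add: semiquasitriangular_def)

context semiquasitriangular_hopf
begin

abbreviation u where "u \<equiv> drinfeld_u mu S R"

lemma hmul2_R_right_cancel:
  assumes "hmul2 mu X R = R"
  shows "X = hv_tens eta eta"
proof -
  obtain R' where R': "hmul2 mu R R' = hv_tens eta eta"
    using semiquasitriangular unfolding semiquasitriangular_def by blast
  have "X = hmul2 mu (hmul2 mu X R) R'"
    by (simp only: hmul2_assoc R' hmul2_unit_right)
  then show ?thesis
    by (simp only: assms R')
qed

lemma comult_R_first:
  assumes "\<And>a b. hv_linear (G a b)"
  shows "hv_lin (\<lambda>(r1, r2). hv_lin (\<lambda>(p, q). G p q (e r2)) (delta r1)) R =
    hv_lin (\<lambda>(r1, r2). hv_lin (\<lambda>(s1, s2). G r1 s1 (m (e r2) (e s2))) R) R"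
proof -
  have "hv_lin (\<lambda>(r1, r2). hv_lin (\<lambda>(p, q). e (p, q, r2)) (delta r1)) R
      = hv_lin (\<lambda>(r1, r2). hv_lin (\<lambda>(s1, s2). hv_tens (e r1) (hv_tens (e s1) (m (e r2) (e s2))))
          R) R"
    using semiquasitriangular unfolding semiquasitriangular_def by blast
  from arg_cong[OF this, of "hv_lin (\<lambda>(p, q, c). G p q (e c))"] show ?thesis
    by (simp add: hv_lin_comp prod.case_distrib hv_lin_tens hv_lin_linear_basis[OF assms])
qed

lemma comult_R_second:
  assumes "\<And>b c. hv_linear (\<lambda>x. G x b c)"
  shows "hv_lin (\<lambda>(r1, r2). hv_lin (\<lambda>(p, q). G (e r1) p q) (delta r2)) R =
    hv_lin (\<lambda>(r1, r2). hv_lin (\<lambda>(s1, s2). G (m (e r1) (e s1)) s2 r2) R) R"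
proof -
  have "hv_lin (\<lambda>(r1, r2). hv_tens (e r1) (delta r2)) R
      = hv_lin (\<lambda>(r1, r2). hv_lin (\<lambda>(s1, s2). hv_tens (m (e r1) (e s1)) (hv_tens (e s2) (e r2)))
          R) R"
    using semiquasitriangular unfolding semiquasitriangular_def by blast
  from arg_cong[OF this, of "hv_lin (\<lambda>(a, p, q). G (e a) p q)"] show ?thesis
    by (simp add: hv_lin_comp prod.case_distrib hv_lin_tens hv_lin_linear_basis[OF assms])
qed

lemma R_comult_second_twist:
  assumes "\<And>a y. hv_linear (\<lambda>x. G a x y)" "\<And>a x. hv_linear (\<lambda>y. G a x y)"
  shows "hv_lin (\<lambda>(r1, r2). hv_lin (\<lambda>(s1, s2). hv_lin (\<lambda>(p, q).
            G r1 (m (e q) (e s1)) (m (e p) (e s2))) (delta r2)) R) R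
       = hv_lin (\<lambda>(r1, r2). hv_lin (\<lambda>(s1, s2). hv_lin (\<lambda>(p, q).
            G r1 (m (e s1) (e p)) (m (e s2) (e q))) (delta r2)) R) R"
proof -
  have ax: "hv_lin (\<lambda>(r1, r2). hv_lin (\<lambda>(s1, s2). hv_lin (\<lambda>(p, q).
            hv_tens (e r1) (hv_tens (m (e q) (e s1)) (m (e p) (e s2)))) (delta r2)) R) R
       = hv_lin (\<lambda>(r1, r2). hv_lin (\<lambda>(s1, s2). hv_lin (\<lambda>(p, q).
            hv_tens (e r1) (hv_tens (m (e s1) (e p)) (m (e s2) (e q)))) (delta r2)) R) R"
    using semiquasitriangular unfolding semiquasitriangular_def by blast
  have collapse: "hv_lin (\<lambda>(a, b, c). G a (e b) (e c)) (hv_tens (e r) (hv_tens X Y)) = G r X Y"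
    for r X Y
    using hv_lin_tens_bilinear[where \<Phi>="G r", OF assms]
    by (simp add: hv_lin_tens del: hv_tens_basis)
  from arg_cong[OF ax, of "hv_lin (\<lambda>(a, b, c). G a (e b) (e c))"] show ?thesis
    by (simp add: hv_lin_comp prod.case_distrib collapse del: hv_tens_basis)
qed

lemma R_comult_first_twist:
  assumes "\<And>c y. hv_linear (\<lambda>x. G x y c)" "\<And>c x. hv_linear (\<lambda>y. G x y c)"
  shows "hv_lin (\<lambda>(r1, r2). hv_lin (\<lambda>(s1, s2). hv_lin (\<lambda>(p, q).
            G (m (e q) (e s1)) (m (e p) (e s2)) r2) (delta r1)) R) R
       = hv_lin (\<lambda>(r1, r2). hv_lin (\<lambda>(s1, s2). hv_lin (\<lambda>(p, q).
            G (m (e s1) (e p)) (m (e s2) (e q)) r2) (delta r1)) R) R"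
proof -
  have ax: "hv_lin (\<lambda>(r1, r2). hv_lin (\<lambda>(s1, s2). hv_lin (\<lambda>(p, q).
            hv_tens (m (e q) (e s1)) (hv_tens (m (e p) (e s2)) (e r2))) (delta r1)) R) R
       = hv_lin (\<lambda>(r1, r2). hv_lin (\<lambda>(s1, s2). hv_lin (\<lambda>(p, q).
            hv_tens (m (e s1) (e p)) (hv_tens (m (e s2) (e q)) (e r2))) (delta r1)) R) R"
    using semiquasitriangular unfolding semiquasitriangular_def by blast
  have collapse: "hv_lin (\<lambda>(a, b, c). G (e a) (e b) c) (hv_tens X (hv_tens Y (e r))) = G X Y r"
    for X Y r
    using hv_lin_tens_bilinear[where \<Phi>="\<lambda>x y. G x y r", OF assms]
    by (simp add: hv_lin_tens del: hv_tens_basis)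
  from arg_cong[OF ax, of "hv_lin (\<lambda>(a, b, c). G (e a) (e b) c)"] show ?thesis
    by (simp add: hv_lin_comp prod.case_distrib collapse del: hv_tens_basis)
qed

text \<open>By (1), R = (1 \<otimes> (\<epsilon> \<otimes> id)(R)) R, and R can be cancelled.\<close>

lemma counit_R_first: "hv_lin (\<lambda>(a, b). hv_smul (eps a) (e b)) R = eta"
proof -
  have "R = hv_lin (\<lambda>(r1, r2). hv_lin (\<lambda>(p, q). hv_smul (eps p) (hv_tens (e q) (e r2)))
      (delta r1)) R"
    by (simp only: counit_left hv_lin_pair_basis)
  also have "\<dots> = hv_lin (\<lambda>(r1, r2). hv_lin (\<lambda>(s1, s2).
      hv_smul (eps r1) (hv_tens (e s1) (m (e r2) (e s2)))) R) R"
    by (rule comult_R_first) (rule hv_linear_intros)+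
  also have "\<dots> = hmul2 mu (hv_lin (\<lambda>(r1, r2). hv_tens (hv_smul (eps r1) eta) (e r2)) R)
      (hv_lin (\<lambda>(s1, s2). hv_tens (e s1) (e s2)) R)"
    by (simp only: hmul2_hv_lin_tens) (simp add: hmul_smul_left hv_tens_smul_left)
  also have "\<dots> = hmul2 mu (hv_tens eta (hv_lin (\<lambda>(a, b). hv_smul (eps a) (e b)) R)) R"
    by (simp add: hv_lin_basis_id hv_tens_hv_lin_right hv_tens_smul_left hv_tens_smul_right
        split_def)
  finally have "hv_tens eta (hv_lin (\<lambda>(a, b). hv_smul (eps a) (e b)) R) = hv_tens eta eta"
    by (intro hmul2_R_right_cancel) simp
  from arg_cong[OF this, of "hv_lin (\<lambda>(a, b). hv_smul (eps a) (e b))"] show ?thesis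
    by (simp add: hv_lin_functional_tens_left counit_unit)
qed

lemma counit_R_second: "hv_lin (\<lambda>(a, b). hv_smul (eps b) (e a)) R = eta"
proof -
  have "R = hv_lin (\<lambda>(r1, r2). hv_lin (\<lambda>(p, q). hv_smul (eps q) (hv_tens (e r1) (e p)))
      (delta r2)) R"
    by (simp only: counit_right hv_lin_pair_basis)
  also have "\<dots> = hv_lin (\<lambda>(r1, r2). hv_lin (\<lambda>(s1, s2).
      hv_smul (eps r2) (hv_tens (m (e r1) (e s1)) (e s2))) R) R"
    by (rule comult_R_second) (rule hv_linear_intros)+
  also have "\<dots> = hmul2 mu (hv_lin (\<lambda>(r1, r2). hv_tens (e r1) (hv_smul (eps r2) eta)) R)
      (hv_lin (\<lambda>(s1, s2). hv_tens (e s1) (e s2)) R)"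
    by (simp only: hmul2_hv_lin_tens) (simp add: hmul_smul_left hv_tens_smul_right)
  also have "\<dots> = hmul2 mu (hv_tens (hv_lin (\<lambda>(a, b). hv_smul (eps b) (e a)) R) eta) R"
    by (simp add: hv_lin_basis_id hv_tens_hv_lin_left hv_tens_smul_left hv_tens_smul_right
        split_def)
  finally have "hv_tens (hv_lin (\<lambda>(a, b). hv_smul (eps b) (e a)) R) eta = hv_tens eta eta"
    by (intro hmul2_R_right_cancel) simp
  from arg_cong[OF this, of "hv_lin (\<lambda>(a, b). hv_smul (eps b) (e a))"] show ?thesis
    by (simp add: hv_lin_functional_tens_right counit_unit)
qed

lemma antipode_first_R_mult_R:
  "hmul2 mu (hv_lin (\<lambda>(a, b). hv_tens (Sv (e a)) (e b)) R) R = hv_tens eta eta"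
proof -
  have "hv_tens eta eta = hv_tens eta (hv_lin (\<lambda>(a, b). hv_smul (eps a) (e b)) R)"
    by (simp only: counit_R_first)
  also have "\<dots> = hv_lin (\<lambda>(r1, r2). hv_smul (eps r1) (hv_tens eta (e r2))) R"
    by (simp add: hv_tens_hv_lin_right hv_tens_smul_right split_def)
  also have "\<dots> = hv_lin (\<lambda>(r1, r2).
      hv_lin (\<lambda>(p, q). hv_tens (m (Sv (e p)) (e q)) (e r2)) (delta r1)) R"
    by (rule hv_lin_cong_pairs, rule antipode_left[symmetric]) (rule hv_linear_intros)+
  also have "\<dots> = hv_lin (\<lambda>(r1, r2). hv_lin (\<lambda>(s1, s2).
      hv_tens (m (Sv (e r1)) (e s1)) (m (e r2) (e s2))) R) R"
    by (rule comult_R_first) (rule hv_linear_intros)+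
  also have "\<dots> = hmul2 mu (hv_lin (\<lambda>(a, b). hv_tens (Sv (e a)) (e b)) R) R"
    by (subst (3) hv_lin_pair_basis[symmetric]) (simp only: hmul2_hv_lin_tens)
  finally show ?thesis ..
qed

lemma antipode_both_R_mult_antipode_first_R:
  "hmul2 mu (hv_lin (\<lambda>(a, b). hv_tens (Sv (e a)) (Sv (e b))) R)
     (hv_lin (\<lambda>(a, b). hv_tens (Sv (e a)) (e b)) R) = hv_tens eta eta"
proof -
  have "hv_tens eta eta = hv_tens (Sv (hv_lin (\<lambda>(a, b). hv_smul (eps b) (e a)) R)) eta"
    by (simp only: counit_R_second antipode_unit)
  also have "\<dots> = hv_lin (\<lambda>(r1, r2). hv_smul (eps r2) (hv_tens (Sv (e r1)) eta)) R"
    by (simp add: antipode_hv_lin hv_linearD[OF hv_linear_antipode] hv_tens_hv_lin_left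
        hv_tens_smul_left split_def)
  also have "\<dots> = hv_lin (\<lambda>(r1, r2).
      hv_lin (\<lambda>(p, q). hv_tens (Sv (e r1)) (m (Sv (e p)) (e q))) (delta r2)) R"
    by (rule hv_lin_cong_pairs, rule antipode_left[symmetric]) (rule hv_linear_intros)+
  also have "\<dots> = hv_lin (\<lambda>(r1, r2). hv_lin (\<lambda>(s1, s2).
      hv_tens (Sv (m (e r1) (e s1))) (m (Sv (e s2)) (e r2))) R) R"
    by (rule comult_R_second) (rule hv_linear_intros)+
  also have "\<dots> = hv_lin (\<lambda>(s1, s2). hv_lin (\<lambda>(r1, r2).
      hv_tens (m (Sv (e s1)) (Sv (e r1))) (m (Sv (e s2)) (e r2))) R) R"
    by (simp only: antipode_mult) (rule hv_lin_swap_pairs)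
  also have "\<dots> = hmul2 mu (hv_lin (\<lambda>(a, b). hv_tens (Sv (e a)) (Sv (e b))) R)
      (hv_lin (\<lambda>(a, b). hv_tens (Sv (e a)) (e b)) R)"
    by (simp only: hmul2_hv_lin_tens)
  finally show ?thesis ..
qed

lemma antipode_both_R: "hv_lin (\<lambda>(a, b). hv_tens (Sv (e a)) (Sv (e b))) R = R"
proof -
  have "hv_lin (\<lambda>(a, b). hv_tens (Sv (e a)) (Sv (e b))) R
      = hmul2 mu (hv_lin (\<lambda>(a, b). hv_tens (Sv (e a)) (Sv (e b))) R)
          (hmul2 mu (hv_lin (\<lambda>(a, b). hv_tens (Sv (e a)) (e b)) R) R)"
    by (simp only: antipode_first_R_mult_R hmul2_unit_right)
  also have "\<dots> = R"
    by (simp only: hmul2_assoc[symmetric] antipode_both_R_mult_antipode_first_R hmul2_unit_left)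
  finally show ?thesis .
qed

lemma R_antipode_both:
  assumes "\<And>y. hv_linear (\<lambda>x. G x y)" "\<And>x. hv_linear (\<lambda>y. G x y)"
  shows "hv_lin (\<lambda>(a, b). G (Sv (e a)) (Sv (e b))) R = hv_lin (\<lambda>(a, b). G (e a) (e b)) R"
  using arg_cong[OF antipode_both_R, of "hv_lin (\<lambda>(a, b). G (e a) (e b))"]
  by (simp add: hv_lin_comp prod.case_distrib hv_lin_tens_bilinear[OF assms])

section \<open>The Drinfeld element\<close>

lemma antipode_drinfeld_u: "Sv u = hv_lin (\<lambda>(r1, r2). m (Sv (e r1)) (Sv (Sv (e r2)))) R"
  unfolding drinfeld_u_def by (simp add: antipode_hv_lin prod.case_distrib antipode_mult)

lemma antipode_drinfeld_u': "Sv u = hv_lin (\<lambda>(r1, r2). m (e r1) (Sv (e r2))) R"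
  unfolding antipode_drinfeld_u
  by (rule R_antipode_both[where G="\<lambda>x y. m x (Sv y)"]) (rule hv_linear_intros)+

lemma antipode_antipode_drinfeld_u: "Sv (Sv u) = u"
proof -
  have "Sv (Sv u) = hv_lin (\<lambda>(r1, r2). m (Sv (Sv (e r2))) (Sv (e r1))) R"
    unfolding antipode_drinfeld_u' by (simp add: antipode_hv_lin prod.case_distrib antipode_mult)
  also have "\<dots> = u"
    unfolding drinfeld_u_def
    by (rule R_antipode_both[where G="\<lambda>x y. m (Sv y) x"]) (rule hv_linear_intros)+
  finally show ?thesis .
qed

lemma antipode_antipode_inverse_drinfeld_u:
  assumes "m u v = eta" "m v u = eta"
  shows "Sv (Sv v) = v"
proof -
  have "Sv (Sv v) = m (Sv (Sv v)) (m u v)" by (simp add: assms)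
  also have "\<dots> = m (Sv (Sv (m v u))) v"
    by (simp add: mult_assoc antipode_mult antipode_antipode_drinfeld_u)
  also have "\<dots> = v" by (simp add: assms antipode_unit)
  finally show ?thesis .
qed

lemma drinfeld_u_mult_basis:
  "m u (e y) = hv_lin (\<lambda>(x, r). hv_lin (\<lambda>(s1, s2). hv_lin (\<lambda>(p, q).
      m (Sv (Sv (e r))) (m (Sv (m (e s2) (e q))) (m (e s1) (e p)))) (delta x)) R) (delta y)"
proof -
  have "m u (e y) = hv_lin (\<lambda>(x, r). hv_lin (\<lambda>(p, q). hv_lin (\<lambda>(s1, s2).
      m (Sv (Sv (e r))) (m (Sv (m (e s2) (e q))) (m (e s1) (e p)))) R) (delta x)) (delta y)"
    by (subst mult_basis_expand)
      (simp add: drinfeld_u_def mult_hv_lin_left mult_hv_lin_right split_def mult_assoc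
        antipode_mult)
  also have "\<dots> = hv_lin (\<lambda>(x, r). hv_lin (\<lambda>(s1, s2). hv_lin (\<lambda>(p, q).
      m (Sv (Sv (e r))) (m (Sv (m (e s2) (e q))) (m (e s1) (e p)))) (delta x)) R) (delta y)"
    by (rule hv_lin_cong_pairs, rule hv_lin_swap_pairs)
  finally show ?thesis .
qed

lemma R_first_twist_drinfeld_u:
  "hv_lin (\<lambda>(r1, r2). hv_lin (\<lambda>(s1, s2). hv_lin (\<lambda>(p, q).
      hv_tens (m (Sv (m (e s2) (e q))) (m (e s1) (e p))) (e r2)) (delta r1)) R) R = hv_tens u eta"
proof -
  have "hv_lin (\<lambda>(r1, r2). hv_lin (\<lambda>(s1, s2). hv_lin (\<lambda>(p, q).
      hv_tens (m (Sv (m (e s2) (e q))) (m (e s1) (e p))) (e r2)) (delta r1)) R) R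
    = hv_lin (\<lambda>(r1, r2). hv_lin (\<lambda>(s1, s2). hv_lin (\<lambda>(p, q).
      hv_tens (m (Sv (m (e p) (e s2))) (m (e q) (e s1))) (e r2)) (delta r1)) R) R"
    by (rule R_comult_first_twist[where G="\<lambda>X Y c. hv_tens (m (Sv Y) X) (e c)", symmetric])
      (rule hv_linear_intros)+
  also have "\<dots> = hv_lin (\<lambda>(r1, r2). hv_lin (\<lambda>(s1, s2).
      hv_smul (eps r1) (hv_tens (m (Sv (e s2)) (e s1)) (e r2))) R) R"
  proof (rule hv_lin_cong_pairs, rule hv_lin_cong_pairs)
    fix r1 r2 s1 s2
    have "hv_lin (\<lambda>(p, q). hv_tens (m (Sv (m (e p) (e s2))) (m (e q) (e s1))) (e r2)) (delta r1)
      = hv_lin (\<lambda>(p, q). hv_tens (m (Sv (e s2)) (m (m (Sv (e p)) (e q)) (e s1))) (e r2)) (delta r1)"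
      by (simp add: antipode_mult mult_assoc)
    also have "\<dots> = hv_smul (eps r1) (hv_tens (m (Sv (e s2)) (e s1)) (e r2))"
      by (subst antipode_left) ((rule hv_linear_intros)+, simp)
    finally show "hv_lin (\<lambda>(p, q). hv_tens (m (Sv (m (e p) (e s2))) (m (e q) (e s1))) (e r2))
        (delta r1)
      = hv_smul (eps r1) (hv_tens (m (Sv (e s2)) (e s1)) (e r2))" .
  qed
  also have "\<dots> = hv_lin (\<lambda>(s1, s2). hv_lin (\<lambda>(r1, r2).
      hv_smul (eps r1) (hv_tens (m (Sv (e s2)) (e s1)) (e r2))) R) R"
    by (rule hv_lin_swap_pairs)
  also have "\<dots> = hv_tens u (hv_lin (\<lambda>(a, b). hv_smul (eps a) (e b)) R)"
    by (simp only: drinfeld_u_def hv_tens_hv_lin_left)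
      (simp add: hv_tens_hv_lin_right hv_tens_smul_right hv_lin_smul_fun[symmetric] split_def)
  finally show ?thesis
    by (simp only: counit_R_first)
qed

lemma R_second_twist_drinfeld_u:
  "hv_lin (\<lambda>(r1, r2). hv_lin (\<lambda>(s1, s2). hv_lin (\<lambda>(p, q).
      hv_tens (e r1) (m (Sv (m (e s2) (e q))) (m (e s1) (e p)))) (delta r2)) R) R = hv_tens eta u"
proof -
  have "hv_lin (\<lambda>(r1, r2). hv_lin (\<lambda>(s1, s2). hv_lin (\<lambda>(p, q).
      hv_tens (e r1) (m (Sv (m (e s2) (e q))) (m (e s1) (e p)))) (delta r2)) R) R
    = hv_lin (\<lambda>(r1, r2). hv_lin (\<lambda>(s1, s2). hv_lin (\<lambda>(p, q).
      hv_tens (e r1) (m (Sv (m (e p) (e s2))) (m (e q) (e s1)))) (delta r2)) R) R"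
    by (rule R_comult_second_twist[where G="\<lambda>a X Y. hv_tens (e a) (m (Sv Y) X)", symmetric])
      (rule hv_linear_intros)+
  also have "\<dots> = hv_lin (\<lambda>(r1, r2). hv_lin (\<lambda>(s1, s2).
      hv_smul (eps r2) (hv_tens (e r1) (m (Sv (e s2)) (e s1)))) R) R"
  proof (rule hv_lin_cong_pairs, rule hv_lin_cong_pairs)
    fix r1 r2 s1 s2
    have "hv_lin (\<lambda>(p, q). hv_tens (e r1) (m (Sv (m (e p) (e s2))) (m (e q) (e s1)))) (delta r2)
      = hv_lin (\<lambda>(p, q). hv_tens (e r1) (m (Sv (e s2)) (m (m (Sv (e p)) (e q)) (e s1)))) (delta r2)"
      by (simp add: antipode_mult mult_assoc)
    also have "\<dots> = hv_smul (eps r2) (hv_tens (e r1) (m (Sv (e s2)) (e s1)))"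
      by (subst antipode_left) ((rule hv_linear_intros)+, simp)
    finally show "hv_lin (\<lambda>(p, q). hv_tens (e r1) (m (Sv (m (e p) (e s2))) (m (e q) (e s1))))
        (delta r2)
      = hv_smul (eps r2) (hv_tens (e r1) (m (Sv (e s2)) (e s1)))" .
  qed
  also have "\<dots> = hv_tens (hv_lin (\<lambda>(a, b). hv_smul (eps b) (e a)) R) u"
    by (simp only: drinfeld_u_def hv_tens_hv_lin_left)
      (simp add: hv_tens_hv_lin_right hv_tens_smul_left hv_lin_smul_fun[symmetric] split_def)
  finally show ?thesis
    by (simp only: counit_R_second)
qed

lemma drinfeld_u_R_second:
  assumes bilinear: "\<And>y. hv_linear (\<lambda>x. \<Phi> x y)" "\<And>x. hv_linear (\<lambda>y. \<Phi> x y)"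
  shows "hv_lin (\<lambda>(r1, r2). \<Phi> (e r1) (m u (e r2))) R =
    hv_lin (\<lambda>(r1, r2). \<Phi> (e r1) (m (Sv (Sv (e r2))) u)) R"
proof -
  define G where "G X x r = hv_lin (\<lambda>(s1, s2). hv_lin (\<lambda>(p, q).
      \<Phi> X (m (Sv (Sv (e r))) (m (Sv (m (e s2) (e q))) (m (e s1) (e p))))) (delta x)) R" for X x r
  have "hv_lin (\<lambda>(r1, r2). \<Phi> (e r1) (m u (e r2))) R
      = hv_lin (\<lambda>(r1, r2). hv_lin (\<lambda>(x, r). G (e r1) x r) (delta r2)) R"
    by (simp add: drinfeld_u_mult_basis G_def hv_linear_hv_lin[OF bilinear(2)] prod.case_distrib)
  also have "\<dots> = hv_lin (\<lambda>(r1, r2). hv_lin (\<lambda>(a, b). G (m (e r1) (e a)) b r2) R) R"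
    unfolding G_def
    by (rule comult_R_second) (rule hv_linear_comp[OF bilinear(1)] hv_linear_intros)+
  also have "\<dots> = hv_lin (\<lambda>(r1, r2). \<Phi> (e r1) (m (Sv (Sv (e r2))) u)) R"
  proof (rule hv_lin_cong_pairs)
    fix r1 r2
    have collapse: "hv_lin (\<lambda>(a, b). \<Phi> (m (e r1) (e a)) (m (Sv (Sv (e r2))) (e b))) (hv_tens X Y)
        = \<Phi> (m (e r1) X) (m (Sv (Sv (e r2))) Y)" for X Y
      by (rule hv_lin_tens_bilinear[where \<Phi>="\<lambda>x y. \<Phi> (m (e r1) x) (m (Sv (Sv (e r2))) y)"])
        (rule hv_linear_comp[OF bilinear(1)] hv_linear_comp[OF bilinear(2)] hv_linear_intros)+
    from arg_cong[OF R_second_twist_drinfeld_u,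
        of "hv_lin (\<lambda>(a, b). \<Phi> (m (e r1) (e a)) (m (Sv (Sv (e r2))) (e b)))"]
    show "hv_lin (\<lambda>(a, b). G (m (e r1) (e a)) b r2) R = \<Phi> (e r1) (m (Sv (Sv (e r2))) u)"
      by (simp add: G_def hv_lin_comp prod.case_distrib collapse del: hv_tens_basis)
  qed
  finally show ?thesis .
qed

lemma drinfeld_u_R_first:
  assumes bilinear: "\<And>y. hv_linear (\<lambda>x. \<Phi> x y)" "\<And>x. hv_linear (\<lambda>y. \<Phi> x y)"
  shows "hv_lin (\<lambda>(r1, r2). \<Phi> (m u (e r1)) (e r2)) R =
    hv_lin (\<lambda>(r1, r2). \<Phi> (m (Sv (Sv (e r1))) u) (e r2)) R"
proof -
  define G where "G x r Y = hv_lin (\<lambda>(s1, s2). hv_lin (\<lambda>(p, q).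
      \<Phi> (m (Sv (Sv (e r))) (m (Sv (m (e s2) (e q))) (m (e s1) (e p)))) Y) (delta x)) R" for x r Y
  have "hv_lin (\<lambda>(r1, r2). \<Phi> (m u (e r1)) (e r2)) R
      = hv_lin (\<lambda>(r1, r2). hv_lin (\<lambda>(x, r). G x r (e r2)) (delta r1)) R"
  proof -
    have push: "\<Phi> (hv_lin f x) Y = hv_lin (\<lambda>a. \<Phi> (f a) Y) x" for f x Y
      using hv_linear_hv_lin[OF bilinear(1)] .
    show ?thesis by (simp add: drinfeld_u_mult_basis G_def push split_def)
  qed
  also have "\<dots> = hv_lin (\<lambda>(r1, r2). hv_lin (\<lambda>(a, b). G r1 a (m (e r2) (e b))) R) R"
    unfolding G_def by (rule comult_R_first) (rule hv_linear_comp[OF bilinear(2)] hv_linear_intros)+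
  also have "\<dots> = hv_lin (\<lambda>(a, b). hv_lin (\<lambda>(r1, r2). G r1 a (m (e r2) (e b))) R) R"
    by (rule hv_lin_swap_pairs)
  also have "\<dots> = hv_lin (\<lambda>(a, b). \<Phi> (m (Sv (Sv (e a))) u) (e b)) R"
  proof (rule hv_lin_cong_pairs)
    fix a b
    have collapse: "hv_lin (\<lambda>(x, y). \<Phi> (m (Sv (Sv (e a))) (e x)) (m (e y) (e b))) (hv_tens X Y)
        = \<Phi> (m (Sv (Sv (e a))) X) (m Y (e b))" for X Y
      by (rule hv_lin_tens_bilinear[where \<Phi>="\<lambda>x y. \<Phi> (m (Sv (Sv (e a))) x) (m y (e b))"])
        (rule hv_linear_comp[OF bilinear(1)] hv_linear_comp[OF bilinear(2)] hv_linear_intros)+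
    from arg_cong[OF R_first_twist_drinfeld_u,
        of "hv_lin (\<lambda>(x, y). \<Phi> (m (Sv (Sv (e a))) (e x)) (m (e y) (e b)))"]
    show "hv_lin (\<lambda>(r1, r2). G r1 a (m (e r2) (e b))) R = \<Phi> (m (Sv (Sv (e a))) u) (e b)"
      by (simp add: G_def hv_lin_comp prod.case_distrib collapse del: hv_tens_basis)
  qed
  finally show ?thesis .
qed

lemma drinfeld_u_commute_antipode: "m u (Sv u) = m (Sv u) u"
proof -
  have "m u (Sv u) = hv_lin (\<lambda>(r1, r2). m (m u (e r1)) (Sv (e r2))) R"
    unfolding antipode_drinfeld_u' by (simp add: mult_hv_lin_right prod.case_distrib mult_assoc)
  also have "\<dots> = hv_lin (\<lambda>(r1, r2). m (m (Sv (Sv (e r1))) u) (Sv (e r2))) R"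
    by (rule drinfeld_u_R_first[where \<Phi>="\<lambda>x y. m x (Sv y)"]) (rule hv_linear_intros)+
  also have "\<dots> = hv_lin (\<lambda>(r1, r2). m (Sv (e r1)) (m u (e r2))) R"
    using R_antipode_both[where G="\<lambda>x y. m (m (Sv x) u) y"]
    by (simp add: hv_linear_intros mult_assoc)
  also have "\<dots> = hv_lin (\<lambda>(r1, r2). m (Sv (e r1)) (m (Sv (Sv (e r2))) u)) R"
    by (rule drinfeld_u_R_second[where \<Phi>="\<lambda>x y. m (Sv x) y"]) (rule hv_linear_intros)+
  also have "\<dots> = m (Sv u) u"
    unfolding antipode_drinfeld_u by (simp add: mult_hv_lin_left split_def mult_assoc)
  finally show ?thesis .
qed

end

theorem corollary3p5:
  fixes mu :: "'b \<Rightarrow> 'b \<Rightarrow> ('b \<Rightarrow>\<^sub>0 'k::field)"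
    and eta :: "'b \<Rightarrow>\<^sub>0 'k"
    and delta :: "'b \<Rightarrow> ('b \<times> 'b \<Rightarrow>\<^sub>0 'k)"
    and eps :: "'b \<Rightarrow> 'k"
    and S :: "'b \<Rightarrow> ('b \<Rightarrow>\<^sub>0 'k)"
    and R :: "'b \<times> 'b \<Rightarrow>\<^sub>0 'k"
  assumes "semiquasitriangular mu eta delta eps S R"
  shows "hS S (hS S (drinfeld_u mu S R)) = drinfeld_u mu S R \<and>
         (\<forall>v. hmul mu (drinfeld_u mu S R) v = eta \<and> hmul mu v (drinfeld_u mu S R) = eta
              \<longrightarrow> hS S (hS S v) = v) \<and>
         hmul mu (drinfeld_u mu S R) (hS S (drinfeld_u mu S R))
           = hmul mu (hS S (drinfeld_u mu S R)) (drinfeld_u mu S R)"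
proof -
  interpret semiquasitriangular_hopf mu eta delta eps S R
    by (rule semiquasitriangular_hopf.intro) (rule assms)
  show ?thesis
    using antipode_antipode_drinfeld_u antipode_antipode_inverse_drinfeld_u
      drinfeld_u_commute_antipode
    by blast
qed

end
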